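(* Let $T,P,S$ be real constants and consider, on $\{(x_3,y_4): 0<x_3<1,\ 0<y_4<1\}$, the system $$\dot x_3=x_3\bigl((T-2P+S)-(T-S)y_4\bigr)\,\frac{y_4(1-x_3)}{(1+y_4-x_3+y_4x_3)^2},\qquad \dot y_4=(1-y_4)\bigl((T-P)x_3-(P-S)\bigr)\,\frac{y_4(1-x_3)}{(1+y_4-x_3+y_4x_3)^2}.$$ Then the function $$H(x_3,y_4)=-(P-S)\bigl(\log x_3+2\log(1-y_4)\bigr)+(T-P)x_3-(T-S)y_4$$ is constant along every solution of this system.
   Context: This system describes the reduced learning dynamics in the exploitative regime of the prisoner's dilemma with payoffs $T>R>P>S$, where $x_3$ is the exploiting player's probability of cooperating after outcome DC and $y_4$ the exploited player's probability of cooperating after outcome DD. *)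

theory Defs
  imports "HOL-Analysis.Analysis"
begin

definition rate :: "real \<Rightarrow> real \<Rightarrow> real" where
  "rate x3 y4 = y4 * (1 - x3) / (1 + y4 - x3 + y4 * x3)^2"

definition fx3 :: "real \<Rightarrow> real \<Rightarrow> real \<Rightarrow> real \<Rightarrow> real \<Rightarrow> real" where
  "fx3 T P S x3 y4 = x3 * ((T - 2*P + S) - (T - S) * y4) * rate x3 y4"

definition fy4 :: "real \<Rightarrow> real \<Rightarrow> real \<Rightarrow> real \<Rightarrow> real \<Rightarrow> real" where
  "fy4 T P S x3 y4 = (1 - y4) * ((T - P) * x3 - (P - S)) * rate x3 y4"

definition Hfun :: "real \<Rightarrow> real \<Rightarrow> real \<Rightarrow> real \<Rightarrow> real \<Rightarrow> real" where
  "Hfun T P S x3 y4 = - (P - S) * (ln x3 + 2 * ln (1 - y4)) + (T - P) * x3 - (T - S) * y4"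

end

theory Submission
  imports Defs
begin

text \<open>
  Its gradient is \<open>(T - P - (P - S)/x3, 2(P - S)/(1 - y4) - (T - S))\<close>;
  after cancelling the factors \<open>x3\<close> and \<open>1 - y4\<close> against the vector field, both terms of
  the orbital derivative carry the factor \<open>(T - P) x3 - (P - S)\<close>, with opposite cofactors
  \<open>\<plusminus>((T - 2P + S) - (T - S) y4)\<close>. So H has zero derivative along solutions and is
  constant on the (connected) time interval.
\<close>

lemma Hfun_gradient_orthogonal_field:
  assumes "x3 \<noteq> 0" and "y4 \<noteq> 1"
  shows "(T - P - (P - S) / x3) * fx3 T P S x3 y4
           + (2 * (P - S) / (1 - y4) - (T - S)) * fy4 T P S x3 y4 = 0"
  using assms unfolding fx3_def fy4_def by (simp add: field_simps)

lemma has_real_derivative_Hfun_comp: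
  assumes "(x3 has_real_derivative x3') (at t within I)"
    and "(y4 has_real_derivative y4') (at t within I)"
    and "0 < x3 t" and "y4 t < 1"
  shows "((\<lambda>t. Hfun T P S (x3 t) (y4 t)) has_real_derivative
           (T - P - (P - S) / x3 t) * x3' + (2 * (P - S) / (1 - y4 t) - (T - S)) * y4')
         (at t within I)"
proof -
  have "((\<lambda>t. Hfun T P S (x3 t) (y4 t)) has_real_derivative
          - (P - S) * (x3' / x3 t + 2 * (- y4' / (1 - y4 t))) + (T - P) * x3' - (T - S) * y4')
        (at t within I)"
    unfolding Hfun_def using assms by (auto intro!: derivative_eq_intros)
  moreover have "- (P - S) * (x3' / x3 t + 2 * (- y4' / (1 - y4 t))) + (T - P) * x3' - (T - S) * y4'
      = (T - P - (P - S) / x3 t) * x3' + (2 * (P - S) / (1 - y4 t) - (T - S)) * y4'"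
    using assms(3,4) by (simp add: field_simps)
  ultimately show ?thesis by simp
qed

theorem mainTheorem2:
  fixes T P S :: real and x3 y4 :: "real \<Rightarrow> real" and I :: "real set"
  assumes "is_interval I"
    and "\<forall>t\<in>I. 0 < x3 t \<and> x3 t < 1 \<and> 0 < y4 t \<and> y4 t < 1"
    and "\<forall>t\<in>I. (x3 has_real_derivative fx3 T P S (x3 t) (y4 t)) (at t within I)"
    and "\<forall>t\<in>I. (y4 has_real_derivative fy4 T P S (x3 t) (y4 t)) (at t within I)"
  shows "\<forall>s\<in>I. \<forall>t\<in>I. Hfun T P S (x3 s) (y4 s) = Hfun T P S (x3 t) (y4 t)"
proof -
  have "((\<lambda>t. Hfun T P S (x3 t) (y4 t)) has_real_derivative 0) (at t within I)"
    if "t \<in> I" for t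
  proof -
    have "0 < x3 t" "y4 t < 1"
      using assms(2) that by auto
    then have "((\<lambda>t. Hfun T P S (x3 t) (y4 t)) has_real_derivative
        (T - P - (P - S) / x3 t) * fx3 T P S (x3 t) (y4 t)
          + (2 * (P - S) / (1 - y4 t) - (T - S)) * fy4 T P S (x3 t) (y4 t)) (at t within I)"
      using assms(3,4) that by (intro has_real_derivative_Hfun_comp) auto
    moreover have "(T - P - (P - S) / x3 t) * fx3 T P S (x3 t) (y4 t)
        + (2 * (P - S) / (1 - y4 t) - (T - S)) * fy4 T P S (x3 t) (y4 t) = 0"
      using \<open>0 < x3 t\<close> \<open>y4 t < 1\<close> by (intro Hfun_gradient_orthogonal_field) auto
    ultimately show ?thesis by simp
  qed
  moreover have "convex I"
    using assms(1) by (simp add: is_interval_convex)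
  ultimately obtain c where "\<forall>t\<in>I. Hfun T P S (x3 t) (y4 t) = c"
    using has_field_derivative_zero_constant by blast
  then show ?thesis by simp
qed

end
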